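(* Under the setting and Assumptions A and B described in the context, let $\Delta_0>0$ be the constant given by the following statement (Theorem 3.7 of the source): for non-increasing step sizes with $\eta_0\le\Delta_0$ one has $D_{KL}(\bar\rho_{T_k}\|\rho_{T_k})\le c_1\eta_0^2e^{-A_0T_k}+c_2d\int_0^{T_k}e^{-A_0(T_k-s)}f(s)\,ds$ with $f=\sum_i\eta_i^2\mathbf 1_{[T_i,T_{i+1})}$ and constants $A_0,c_1,c_2>0$ independent of $k,d$. Let $\theta\in(0,1)$, let $\ell$ be a positive integer with $\ell^{-\theta}\le\Delta_0$, and set $\eta_i=(\ell+i)^{-\theta}$ for $i=0,1,2,\dots$. Then there exist $k_0>0$ and $c>0$ such that for all $k>k_0$, $$D_{KL}(\bar\rho_{T_k}\|\rho_{T_k})\le c\,d\,\Big(\frac1k\Big)^{2\theta}.$$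
   Context: Setting: $d\ge1$, $\beta>0$. Let $\nu$ be a probability distribution of a random element $\xi$; for each $\xi$ let $U(\cdot;\xi):\mathbb{R}^d\to\mathbb{R}$ be differentiable, $U(x)=\mathbb{E}_{\xi\sim\nu}[U(x;\xi)]$, $b^\xi=-\nabla U(\cdot;\xi)$, $b=-\nabla U$, and $\pi(x)\propto e^{-\beta U(x)}$. Langevin diffusion: $dX_t=b(X_t)dt+\sqrt{2\beta^{-1}}dW_t$, $X_0\sim\rho_0$, with $\rho_t$ the density of $X_t$. SGLD: given step sizes $\eta_k>0$, set $T_0=0$, $T_k=\sum_{i=0}^{k-1}\eta_i$; let $\xi_0,\xi_1,\dots$ be i.i.d. with law $\nu$, independent of a standard Brownian motion $W$ in $\mathbb{R}^d$ and of $\bar X_0\sim\rho_0$; for $t\in[T_k,T_{k+1})$ define $\bar X_t=\bar X_{T_k}+(t-T_k)b^{\xi_k}(\bar X_{T_k})+\sqrt{2\beta^{-1}}(W_t-W_{T_k})$, and let $\bar\rho_t$ be the density of $\bar X_t$. $D_{KL}(\mu\|\nu)=\int\log\frac{d\mu}{d\nu}\,d\mu$. Assumption A: (a) for $\nu$-a.e. $\xi$ and all $x,y$, $|b^\xi(x)-b^\xi(y)|\le L|x-y|$; (b) for $\nu$-a.e. $\xi$ and all $x,y$, $|\nabla b^\xi(x)-\nabla b^\xi(y)|\le L_2d^{-1/2}|x-y|$ (spectral norm on the left); (c) for $\nu$-a.e. $\xi$, $x\cdot b^\xi(x)\le-\mu|x|^2+\sigma$ for all $x$; (d) $\operatorname{ess\,sup}_\xi\|b^\xi-b\|_{L^\infty(\mathbb{R}^d)}<\infty$.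 The constants $L,L_2,\mu,\sigma>0$ are independent of $\xi$ and $d$. Assumption B: (a) there is $\lambda\ge1$, independent of $d$, with $\frac1\lambda\le\frac{\rho_0}{\pi}\le\lambda$; (b) $\pi$ satisfies a log-Sobolev inequality with constant $C_\pi^{LS}$: for all positive smooth $f$, $\int f\log f\,d\pi-(\int f\,d\pi)\log(\int f\,d\pi)\le C_\pi^{LS}\int\frac{|\nabla f|^2}{f}d\pi$. *)

theory Defs
  imports "HOL-Probability.Probability"
begin

fun Ck :: "nat \<Rightarrow> ('a::euclidean_space \<Rightarrow> real) \<Rightarrow> bool" where
  "Ck 0 f = continuous_on UNIV f"
| "Ck (Suc k) f = ((\<forall>x. f differentiable (at x)) \<and>
      (\<forall>v. Ck k (\<lambda>x. frechet_derivative f (at x) v)))"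

definition smooth_fun :: "('a::euclidean_space \<Rightarrow> real) \<Rightarrow> bool" where
  "smooth_fun f \<longleftrightarrow> (\<forall>k. Ck k f)"

definition log_sobolev :: "'a::euclidean_space measure \<Rightarrow> real \<Rightarrow> bool" where
  "log_sobolev P C \<longleftrightarrow>
    (\<forall>f g. (\<forall>x. f x > 0) \<longrightarrow> smooth_fun f \<longrightarrow> (\<forall>x. GDERIV f x :> g x) \<longrightarrow>
      integrable P f \<longrightarrow> integrable P (\<lambda>x. f x * ln (f x)) \<longrightarrow>
      integrable P (\<lambda>x. (norm (g x))\<^sup>2 / f x) \<longrightarrow>
      (\<integral>x. f x * ln (f x) \<partial>P) - (\<integral>x. f x \<partial>P) * ln (\<integral>x. f x \<partial>P)
        \<le> C * (\<integral>x. (norm (g x))\<^sup>2 / f x \<partial>P))"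

definition gibbs_density :: "real \<Rightarrow> ('a::euclidean_space \<Rightarrow> real) \<Rightarrow> 'a \<Rightarrow> real" where
  "gibbs_density \<beta> U x = exp (- \<beta> * U x) / (\<integral>y. exp (- \<beta> * U y) \<partial>lborel)"

text \<open>D_KL(mu||nu) = int log (d mu / d nu) d mu, and +infinity if mu is not
  absolutely continuous w.r.t. nu or the integral diverges.
  Note RN_deriv nu mu is the density of mu w.r.t. nu.\<close>
definition DKL :: "'a measure \<Rightarrow> 'a measure \<Rightarrow> ereal" where
  "DKL \<mu> \<nu> = (if absolutely_continuous \<nu> \<mu> \<and> sets \<mu> = sets \<nu> \<and>
       integrable \<mu> (\<lambda>x. ln (enn2real (RN_deriv \<nu> \<mu> x)))
     then ereal (\<integral>x. ln (enn2real (RN_deriv \<nu> \<mu> x)) \<partial>\<mu>) else \<infinity>)"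

definition std_gauss_density :: "real \<Rightarrow> 'a::euclidean_space \<Rightarrow> real" where
  "std_gauss_density v x = (\<Prod>e\<in>Basis. normal_density 0 (sqrt v) (x \<bullet> e))"

definition brownian_motion :: "'w measure \<Rightarrow> (real \<Rightarrow> 'w \<Rightarrow> 'a::euclidean_space) \<Rightarrow> bool" where
  "brownian_motion M W \<longleftrightarrow>
     (\<forall>t. W t \<in> borel_measurable M) \<and>
     (\<forall>\<omega>\<in>space M. W 0 \<omega> = 0) \<and>
     (\<forall>\<omega>\<in>space M. continuous_on {0..} (\<lambda>t. W t \<omega>)) \<and>
     (\<forall>s t. 0 \<le> s \<longrightarrow> s < t \<longrightarrow>
        distr M borel (\<lambda>\<omega>. W t \<omega> - W s \<omega>) =
        density lborel (\<lambda>x. ennreal (std_gauss_density (t - s) x))) \<and>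
     (\<forall>(ts :: nat \<Rightarrow> real) n. 0 \<le> ts 0 \<longrightarrow> (\<forall>j<n. ts j < ts (Suc j)) \<longrightarrow>
        prob_space.indep_vars M (\<lambda>_. borel) (\<lambda>j \<omega>. W (ts (Suc j)) \<omega> - W (ts j) \<omega>) {..<n})"

definition Tk :: "(nat \<Rightarrow> real) \<Rightarrow> nat \<Rightarrow> real" where
  "Tk \<eta> k = (\<Sum>i<k. \<eta> i)"

text \<open>The SGLD process sampled at the grid times T_k (X-bar at time T_k).\<close>
fun sgld :: "real \<Rightarrow> (nat \<Rightarrow> real) \<Rightarrow> ('x \<Rightarrow> 'a \<Rightarrow> 'a::euclidean_space) \<Rightarrow>
   (nat \<Rightarrow> 'w \<Rightarrow> 'x) \<Rightarrow> (real \<Rightarrow> 'w \<Rightarrow> 'a) \<Rightarrow> ('w \<Rightarrow> 'a) \<Rightarrow> nat \<Rightarrow> 'w \<Rightarrow> 'a" where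
  "sgld \<beta> \<eta> bx \<xi> W X0 0 \<omega> = X0 \<omega>"
| "sgld \<beta> \<eta> bx \<xi> W X0 (Suc k) \<omega> =
     sgld \<beta> \<eta> bx \<xi> W X0 k \<omega> + \<eta> k *\<^sub>R bx (\<xi> k \<omega>) (sgld \<beta> \<eta> bx \<xi> W X0 k \<omega>)
     + sqrt (2 / \<beta>) *\<^sub>R (W (Tk \<eta> (Suc k)) \<omega> - W (Tk \<eta> k) \<omega>)"

definition step_profile :: "(nat \<Rightarrow> real) \<Rightarrow> real \<Rightarrow> real" where
  "step_profile \<eta> s = (\<Sum>i. (\<eta> i)\<^sup>2 * indicator {Tk \<eta> i..<Tk \<eta> (Suc i)} s)"

definition thm37_bound :: "'w measure \<Rightarrow> real \<Rightarrow> ('x \<Rightarrow> 'a \<Rightarrow> 'a::euclidean_space) \<Rightarrow>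
   (nat \<Rightarrow> 'w \<Rightarrow> 'x) \<Rightarrow> (real \<Rightarrow> 'w \<Rightarrow> 'a) \<Rightarrow> ('w \<Rightarrow> 'a) \<Rightarrow> (real \<Rightarrow> 'w \<Rightarrow> 'a) \<Rightarrow> real \<Rightarrow> bool" where
  "thm37_bound M \<beta> bx \<xi> W X0 X \<Delta>0 \<longleftrightarrow>
    (\<exists>A0 c1 c2. A0 > 0 \<and> c1 > 0 \<and> c2 > 0 \<and>
      (\<forall>\<eta>::nat \<Rightarrow> real. (\<forall>i. \<eta> i > 0) \<longrightarrow> decseq \<eta> \<longrightarrow> \<eta> 0 \<le> \<Delta>0 \<longrightarrow>
        (\<forall>k. DKL (distr M borel (sgld \<beta> \<eta> bx \<xi> W X0 k)) (distr M borel (X (Tk \<eta> k)))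
          \<le> ereal (c1 * (\<eta> 0)\<^sup>2 * exp (- A0 * Tk \<eta> k)
              + c2 * real DIM('a) * integral {0..Tk \<eta> k}
                  (\<lambda>s. exp (- A0 * (Tk \<eta> k - s)) * step_profile \<eta> s)))))"

end

theory Submission
  imports Defs "HOL-Real_Asymp.Real_Asymp"
begin

text \<open>By Theorem 3.7 it suffices to show that its right-hand side is O(d k^(-2 theta)) for
  eta_i = (ell + i)^(-theta).  Split the integral at T_m with m = k div 2.  On [0, T_m) the profile
  is at most eta_0^2 and the discount factor is at most exp (-A0 (T_k - T_m)); since
  T_k - T_m >= k^(1-theta)/4, this part is exponentially small, and so is the initial term.  On
  [T_m, T_k] the profile is at most eta_m^2 <= 4 k^(-2 theta) and the discount factor integrates
  to at most 1/A0.\<close>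

lemma Tk_nonneg: "(\<And>i. 0 \<le> \<eta> i) \<Longrightarrow> 0 \<le> Tk \<eta> k"
  unfolding Tk_def by (simp add: sum_nonneg)

lemma Tk_mono: "(\<And>i. 0 \<le> \<eta> i) \<Longrightarrow> m \<le> k \<Longrightarrow> Tk \<eta> m \<le> Tk \<eta> k"
  unfolding Tk_def by (intro sum_mono2) auto

lemma Tk_le: "(\<And>i. \<eta> i \<le> B) \<Longrightarrow> Tk \<eta> k \<le> real k * B"
  unfolding Tk_def using sum_bounded_above[of "{..<k}" \<eta> B] by simp

lemma Tk_diff: "m \<le> k \<Longrightarrow> Tk \<eta> k - Tk \<eta> m = (\<Sum>i\<in>{m..<k}. \<eta> i)"
  unfolding Tk_def by (metis sum_diff_nat_ivl lessThan_atLeast0 zero_le)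

lemma Tk_diff_ge_decseq:
  assumes "decseq \<eta>" "m \<le> k"
  shows "real (k - m) * \<eta> k \<le> Tk \<eta> k - Tk \<eta> m"
  unfolding Tk_diff[OF assms(2)]
  using sum_bounded_below[of "{m..<k}" "\<eta> k" \<eta>] assms(1) by (auto simp: decseq_def)

lemma Tk_intervals_disjoint:
  assumes "\<And>i. 0 \<le> \<eta> i" "s \<in> {Tk \<eta> i..<Tk \<eta> (Suc i)}" "s \<in> {Tk \<eta> j..<Tk \<eta> (Suc j)}"
  shows "i = j"
proof (rule ccontr)
  assume "i \<noteq> j"
  then consider "Suc i \<le> j" | "Suc j \<le> i" by linarith
  then show False
  proof cases
    case 1
    then show False using assms Tk_mono[of \<eta> "Suc i" j] by auto
  next
    case 2
    then show False using assms Tk_mono[of \<eta> "Suc j" i] by auto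
  qed
qed

lemma step_profile_eq:
  assumes nonneg: "\<And>i. 0 \<le> \<eta> i" and s: "s \<in> {Tk \<eta> i..<Tk \<eta> (Suc i)}"
  shows "step_profile \<eta> s = (\<eta> i)\<^sup>2"
proof -
  have "(\<eta> n)\<^sup>2 * indicator {Tk \<eta> n..<Tk \<eta> (Suc n)} s = (if n = i then (\<eta> i)\<^sup>2 else 0)" for n
  proof (cases "n = i")
    case False
    then have "s \<notin> {Tk \<eta> n..<Tk \<eta> (Suc n)}"
      using Tk_intervals_disjoint[OF nonneg s] by metis
    then show ?thesis using False by simp
  qed (use s in \<open>simp add: indicator_def\<close>)
  then have "(\<lambda>n. (\<eta> n)\<^sup>2 * indicator {Tk \<eta> n..<Tk \<eta> (Suc n)} s) sums (\<eta> i)\<^sup>2"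
    using sums_single[of i "\<lambda>_. (\<eta> i)\<^sup>2"] by simp
  then show ?thesis
    unfolding step_profile_def by (rule sums_unique[symmetric])
qed

lemma step_profile_eq_0:
  assumes "\<And>i. s \<notin> {Tk \<eta> i..<Tk \<eta> (Suc i)}"
  shows "step_profile \<eta> s = 0"
proof -
  have "(\<lambda>n. (\<eta> n)\<^sup>2 * indicator {Tk \<eta> n..<Tk \<eta> (Suc n)} s) = (\<lambda>_. 0 :: real)"
    using assms by (auto simp: indicator_def)
  then show ?thesis unfolding step_profile_def by simp
qed

lemma step_profile_nonneg:
  assumes "\<And>i. 0 \<le> \<eta> i"
  shows "0 \<le> step_profile \<eta> s"
proof (cases "\<exists>i. s \<in> {Tk \<eta> i..<Tk \<eta> (Suc i)}")
  case True
  then show ?thesis using step_profile_eq[OF assms] by auto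
qed (simp add: step_profile_eq_0)

lemma step_profile_le_decseq:
  assumes nonneg: "\<And>i. 0 \<le> \<eta> i" and dec: "decseq \<eta>" and s: "Tk \<eta> m \<le> s"
  shows "step_profile \<eta> s \<le> (\<eta> m)\<^sup>2"
proof (cases "\<exists>i. s \<in> {Tk \<eta> i..<Tk \<eta> (Suc i)}")
  case True
  then obtain i where i: "s \<in> {Tk \<eta> i..<Tk \<eta> (Suc i)}" by blast
  with s have "m \<le> i"
    using Tk_mono[of \<eta> "Suc i" m] nonneg by (cases "m \<le> i") auto
  then have "\<eta> i \<le> \<eta> m" using dec by (simp add: decseq_def)
  then show ?thesis
    using step_profile_eq[OF nonneg i] nonneg by (simp add: power_mono)
qed (simp add: step_profile_eq_0)

lemma discounted_step_profile_le:
  fixes A0 T s :: real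
  assumes nonneg: "\<And>i. 0 \<le> \<eta> i" and dec: "decseq \<eta>" and A0: "0 \<le> A0" and s: "0 \<le> s"
  shows "exp (- A0 * (T - s)) * step_profile \<eta> s
     \<le> (\<eta> 0)\<^sup>2 * exp (- A0 * (T - Tk \<eta> m)) + (\<eta> m)\<^sup>2 * exp (- A0 * (T - s))"
proof (cases "Tk \<eta> m \<le> s")
  case True
  then have "step_profile \<eta> s \<le> (\<eta> m)\<^sup>2"
    by (rule step_profile_le_decseq[OF nonneg dec])
  then have "exp (- A0 * (T - s)) * step_profile \<eta> s \<le> (\<eta> m)\<^sup>2 * exp (- A0 * (T - s))"
    by (subst mult.commute) (rule mult_right_mono; simp)
  then show ?thesis by (rule add_increasing[rotated]) simp
next
  case False
  have "step_profile \<eta> s \<le> (\<eta> 0)\<^sup>2"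
    using step_profile_le_decseq[OF nonneg dec, of 0] s by (simp add: Tk_def)
  moreover have "exp (- A0 * (T - s)) \<le> exp (- A0 * (T - Tk \<eta> m))"
    using False A0 by (intro exp_mono mult_left_mono_neg) auto
  ultimately have "step_profile \<eta> s * exp (- A0 * (T - s)) \<le> (\<eta> 0)\<^sup>2 * exp (- A0 * (T - Tk \<eta> m))"
    using step_profile_nonneg[OF nonneg] by (intro mult_mono) auto
  then show ?thesis by (subst mult.commute) (rule add_increasing2[rotated]; simp)
qed

lemma exp_decay_has_integral:
  fixes A0 T :: real
  assumes "0 < A0" "0 \<le> T"
  shows "((\<lambda>s. exp (- A0 * (T - s))) has_integral (1 - exp (- A0 * T)) / A0) {0..T}"
proof -
  have "((\<lambda>s. exp (- A0 * (T - s))) has_integral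
          exp (- A0 * (T - T)) / A0 - exp (- A0 * (T - 0)) / A0) {0..T}"
  proof (rule fundamental_theorem_of_calculus)
    fix x assume "x \<in> {0..T}"
    show "((\<lambda>s. exp (- A0 * (T - s)) / A0) has_vector_derivative exp (- A0 * (T - x))) (at x within {0..T})"
      using assms(1)
      by (auto intro!: derivative_eq_intros simp flip: has_real_derivative_iff_has_vector_derivative)
  qed fact
  then show ?thesis by (simp add: diff_divide_distrib)
qed

lemma integral_discounted_step_profile_le:
  fixes A0 T :: real
  assumes nonneg: "\<And>i. 0 \<le> \<eta> i" and dec: "decseq \<eta>" and A0: "0 < A0" and T: "0 \<le> T"
  shows "integral {0..T} (\<lambda>s. exp (- A0 * (T - s)) * step_profile \<eta> s)
     \<le> T * (\<eta> 0)\<^sup>2 * exp (- A0 * (T - Tk \<eta> m)) + (\<eta> m)\<^sup>2 / A0"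
proof -
  let ?f = "\<lambda>s. exp (- A0 * (T - s)) * step_profile \<eta> s"
  let ?g = "\<lambda>s. (\<eta> 0)\<^sup>2 * exp (- A0 * (T - Tk \<eta> m)) + (\<eta> m)\<^sup>2 * exp (- A0 * (T - s))"
  have g: "(?g has_integral T * (\<eta> 0)\<^sup>2 * exp (- A0 * (T - Tk \<eta> m))
        + (\<eta> m)\<^sup>2 * ((1 - exp (- A0 * T)) / A0)) {0..T}"
    using T has_integral_const_real[of "(\<eta> 0)\<^sup>2 * exp (- A0 * (T - Tk \<eta> m))" 0 T]
    by (intro has_integral_add has_integral_mult_right exp_decay_has_integral A0) (auto simp: mult.assoc)
  have "(\<eta> m)\<^sup>2 * ((1 - exp (- A0 * T)) / A0) \<le> (\<eta> m)\<^sup>2 / A0"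
    using A0 by (simp add: divide_right_mono mult_left_le)
  moreover have "integral {0..T} ?f \<le> T * (\<eta> 0)\<^sup>2 * exp (- A0 * (T - Tk \<eta> m))
        + (\<eta> m)\<^sup>2 * ((1 - exp (- A0 * T)) / A0)"
  proof (cases "?f integrable_on {0..T}")
    case True
    have "?f s \<le> ?g s" if "s \<in> {0..T}" for s
      using discounted_step_profile_le[OF nonneg dec] A0 that by simp
    then show ?thesis
      using has_integral_le[OF integrable_integral[OF True] g] by blast
  next
    case False
    have "exp (- A0 * T) \<le> 1" using A0 T by simp
    then show ?thesis
      using False A0 T by (simp add: not_integrable_integral)
  qed
  ultimately show ?thesis by linarith
qed

definition poly_schedule :: "nat \<Rightarrow> real \<Rightarrow> nat \<Rightarrow> real" where
  "poly_schedule ell \<theta> i = real (ell + i) powr (- \<theta>)"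

lemma poly_schedule_pos: "0 < ell \<Longrightarrow> 0 < poly_schedule ell \<theta> i"
  unfolding poly_schedule_def by simp

lemma poly_schedule_decseq: "0 < ell \<Longrightarrow> 0 \<le> \<theta> \<Longrightarrow> decseq (poly_schedule ell \<theta>)"
  unfolding decseq_def poly_schedule_def by (auto intro!: powr_mono2')

lemma poly_schedule_le_one: "0 < ell \<Longrightarrow> 0 \<le> \<theta> \<Longrightarrow> poly_schedule ell \<theta> i \<le> 1"
  unfolding poly_schedule_def by (simp add: powr_minus inverse_le_1_iff ge_one_powr_ge_zero)

lemma poly_schedule_half_sq_le:
  assumes ell: "0 < ell" and \<theta>: "0 \<le> \<theta>" "\<theta> \<le> 1" and k: "0 < k"
  shows "(poly_schedule ell \<theta> (k div 2))\<^sup>2 \<le> 4 * real k powr (- 2 * \<theta>)"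
proof -
  have "k \<le> 2 * (ell + k div 2)" using ell by presburger
  then have "real k \<le> 2 * real (ell + k div 2)" by (metis of_nat_le_iff of_nat_mult of_nat_numeral)
  then have "real k / 2 \<le> real (ell + k div 2)" by (simp only: divide_le_eq_numeral1 mult.commute)
  then have "poly_schedule ell \<theta> (k div 2) \<le> (real k / 2) powr (- \<theta>)"
    unfolding poly_schedule_def using \<theta> k by (intro powr_mono2') auto
  also have "\<dots> = 2 powr \<theta> * real k powr (- \<theta>)"
    unfolding powr_divide powr_minus by (simp add: field_simps)
  also have "\<dots> \<le> 2 * real k powr (- \<theta>)"
    using powr_mono[of \<theta> 1 2] \<theta> by (intro mult_right_mono) auto
  finally have "(poly_schedule ell \<theta> (k div 2))\<^sup>2 \<le> (2 * real k powr (- \<theta>))\<^sup>2"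
    using poly_schedule_pos[OF ell] by (intro power_mono) (auto intro: less_imp_le)
  also have "\<dots> = 4 * real k powr (- 2 * \<theta>)"
    using k by (simp add: power_mult_distrib powr_power)
  finally show ?thesis .
qed

lemma poly_schedule_Tk_gap:
  assumes ell: "0 < ell" and \<theta>: "0 \<le> \<theta>" "\<theta> \<le> 1" and k: "ell \<le> k"
  shows "real k powr (1 - \<theta>) / 4 \<le> Tk (poly_schedule ell \<theta>) k - Tk (poly_schedule ell \<theta>) (k div 2)"
proof -
  have "k \<le> 2 * (k - k div 2)" by presburger
  then have "real k \<le> 2 * real (k - k div 2)" by (metis of_nat_le_iff of_nat_mult of_nat_numeral)
  then have half: "real k / 2 \<le> real (k - k div 2)" by (simp only: divide_le_eq_numeral1 mult.commute)
  have "1 / 2 * real k powr (- \<theta>) \<le> 2 powr (- \<theta>) * real k powr (- \<theta>)"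
    using powr_mono[of "- 1" "- \<theta>" 2] \<theta> by (intro mult_right_mono) (auto simp: powr_minus_divide)
  also have "\<dots> = (2 * real k) powr (- \<theta>)" by (simp add: powr_mult)
  also have "\<dots> \<le> poly_schedule ell \<theta> k"
    unfolding poly_schedule_def using ell k \<theta> by (intro powr_mono2') auto
  finally have last: "real k powr (- \<theta>) / 2 \<le> poly_schedule ell \<theta> k" by simp
  have "real k powr (1 - \<theta>) / 4 = real k / 2 * (real k powr (- \<theta>) / 2)"
    using powr_mult_base[of "real k" "- \<theta>"] by simp
  also have "\<dots> \<le> real (k - k div 2) * poly_schedule ell \<theta> k"
    using half last by (intro mult_mono) auto
  also have "\<dots> \<le> Tk (poly_schedule ell \<theta>) k - Tk (poly_schedule ell \<theta>) (k div 2)"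
    using ell \<theta> by (intro Tk_diff_ge_decseq poly_schedule_decseq) auto
  finally show ?thesis .
qed

lemma poly_schedule_initial_term_le:
  fixes A0 \<theta> :: real and ell :: nat
  defines "\<eta> \<equiv> poly_schedule ell \<theta>"
  assumes A0: "0 \<le> A0" and ell: "0 < ell" and \<theta>: "0 \<le> \<theta>" "\<theta> \<le> 1" and k: "ell \<le> k"
  shows "(\<eta> 0)\<^sup>2 * exp (- A0 * Tk \<eta> k) \<le> exp (- A0 * real k powr (1 - \<theta>) / 4)"
proof -
  have "0 \<le> Tk \<eta> (k div 2)"
    using Tk_nonneg poly_schedule_pos[OF ell] unfolding \<eta>_def by (simp add: less_imp_le)
  then have "real k powr (1 - \<theta>) / 4 \<le> Tk \<eta> k"
    using poly_schedule_Tk_gap[OF ell \<theta> k] unfolding \<eta>_def by linarith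
  then have "A0 * (real k powr (1 - \<theta>) / 4) \<le> A0 * Tk \<eta> k"
    by (rule mult_left_mono[OF _ A0])
  then have "exp (- A0 * Tk \<eta> k) \<le> exp (- A0 * real k powr (1 - \<theta>) / 4)" by simp
  moreover have "(\<eta> 0)\<^sup>2 \<le> 1"
    using poly_schedule_pos[OF ell] poly_schedule_le_one[OF ell \<theta>(1)]
    unfolding \<eta>_def by (simp add: less_imp_le power_le_one)
  ultimately have "(\<eta> 0)\<^sup>2 * exp (- A0 * Tk \<eta> k) \<le> 1 * exp (- A0 * real k powr (1 - \<theta>) / 4)"
    by (intro mult_mono) auto
  then show ?thesis by simp
qed

lemma poly_schedule_discounted_integral_le:
  fixes A0 \<theta> :: real and ell :: nat
  defines "\<eta> \<equiv> poly_schedule ell \<theta>"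
  assumes A0: "0 < A0" and ell: "0 < ell" and \<theta>: "0 \<le> \<theta>" "\<theta> \<le> 1" and k: "ell \<le> k"
  shows "integral {0..Tk \<eta> k} (\<lambda>s. exp (- A0 * (Tk \<eta> k - s)) * step_profile \<eta> s)
    \<le> real k * exp (- A0 * real k powr (1 - \<theta>) / 4) + 4 * real k powr (- 2 * \<theta>) / A0"
proof -
  have nonneg: "0 \<le> \<eta> i" for i
    using poly_schedule_pos[OF ell] by (simp add: \<eta>_def less_imp_le)
  have le_one: "\<eta> i \<le> 1" for i
    using poly_schedule_le_one[OF ell \<theta>(1)] by (simp add: \<eta>_def)
  have T: "0 \<le> Tk \<eta> k" "Tk \<eta> k \<le> real k"
    using Tk_nonneg[of \<eta>] Tk_le[of \<eta> 1] nonneg le_one by auto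
  have "exp (- A0 * (Tk \<eta> k - Tk \<eta> (k div 2))) \<le> exp (- A0 * real k powr (1 - \<theta>) / 4)"
    using poly_schedule_Tk_gap[OF ell \<theta> k] A0 unfolding \<eta>_def by simp
  moreover have "(\<eta> 0)\<^sup>2 \<le> 1" using nonneg le_one by (simp add: power_le_one)
  ultimately have "Tk \<eta> k * (\<eta> 0)\<^sup>2 * exp (- A0 * (Tk \<eta> k - Tk \<eta> (k div 2)))
      \<le> real k * exp (- A0 * real k powr (1 - \<theta>) / 4)"
    using T by (intro mult_mono) (auto intro: order_trans[OF mult_left_le])
  moreover have "(\<eta> (k div 2))\<^sup>2 / A0 \<le> 4 * real k powr (- 2 * \<theta>) / A0"
    using poly_schedule_half_sq_le[OF ell \<theta>] k ell A0 unfolding \<eta>_def by (intro divide_right_mono) auto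
  ultimately show ?thesis
    using integral_discounted_step_profile_le[where \<eta> = \<eta> and m = "k div 2", OF nonneg _ A0 T(1)]
      poly_schedule_decseq[OF ell \<theta>(1)] unfolding \<eta>_def by fastforce
qed

lemma poly_schedule_discounted_bounds:
  fixes A0 \<theta> :: real and ell :: nat
  defines "\<eta> \<equiv> poly_schedule ell \<theta>"
  assumes A0: "0 < A0" and \<theta>: "0 < \<theta>" "\<theta> < 1" and ell: "0 < ell"
  shows "\<forall>\<^sub>F k in sequentially.
    (\<eta> 0)\<^sup>2 * exp (- A0 * Tk \<eta> k) \<le> (1 / real k) powr (2 * \<theta>) \<and>
    integral {0..Tk \<eta> k} (\<lambda>s. exp (- A0 * (Tk \<eta> k - s)) * step_profile \<eta> s)
      \<le> (1 + 4 / A0) * (1 / real k) powr (2 * \<theta>)"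
proof -
  have \<theta>': "0 \<le> \<theta>" "\<theta> \<le> 1" using \<theta> by simp_all
  have "\<forall>\<^sub>F k in sequentially. real k * exp (- A0 * real k powr (1 - \<theta>) / 4) \<le> real k powr (- 2 * \<theta>)"
    using A0 \<theta> by real_asymp
  moreover have "\<forall>\<^sub>F k in sequentially. ell \<le> k" by (rule eventually_ge_at_top)
  ultimately show ?thesis
  proof eventually_elim
    case (elim k)
    define \<epsilon> where "\<epsilon> = exp (- A0 * real k powr (1 - \<theta>) / 4)"
    define q where "q = real k powr (- 2 * \<theta>)"
    have k: "1 \<le> real k" using elim(2) ell by simp
    have q: "(1 / real k) powr (2 * \<theta>) = q"
      unfolding q_def using k by (simp add: powr_divide powr_minus_divide)
    have "\<epsilon> \<le> real k * \<epsilon>" "real k * \<epsilon> \<le> q"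
      using k elim(1) unfolding \<epsilon>_def q_def by simp_all
    moreover have "(1 + 4 / A0) * q = q + 4 * q / A0" by (simp add: algebra_simps)
    ultimately show ?case
      unfolding q using poly_schedule_initial_term_le[OF less_imp_le[OF A0] ell \<theta>' elim(2)]
        poly_schedule_discounted_integral_le[OF A0 ell \<theta>' elim(2)]
      unfolding \<eta>_def \<epsilon>_def[symmetric] q_def[symmetric] by linarith
  qed
qed

lemma poly_schedule_rhs_le:
  fixes A0 \<theta> c1 c2 D :: real and ell :: nat
  defines "\<eta> \<equiv> poly_schedule ell \<theta>"
  assumes A0: "0 < A0" and \<theta>: "0 < \<theta>" "\<theta> < 1" and ell: "0 < ell"
    and c: "0 \<le> c1" "0 \<le> c2" and D: "1 \<le> D"
  shows "\<forall>\<^sub>F k in sequentially.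
    c1 * (\<eta> 0)\<^sup>2 * exp (- A0 * Tk \<eta> k)
      + c2 * D * integral {0..Tk \<eta> k} (\<lambda>s. exp (- A0 * (Tk \<eta> k - s)) * step_profile \<eta> s)
    \<le> (c1 + c2 * (1 + 4 / A0)) * D * (1 / real k) powr (2 * \<theta>)"
  using poly_schedule_discounted_bounds[OF A0 \<theta> ell] unfolding \<eta>_def[symmetric]
proof eventually_elim
  case (elim k)
  define q where "q = (1 / real k) powr (2 * \<theta>)"
  have "c1 * (\<eta> 0)\<^sup>2 * exp (- A0 * Tk \<eta> k)
      + c2 * D * integral {0..Tk \<eta> k} (\<lambda>s. exp (- A0 * (Tk \<eta> k - s)) * step_profile \<eta> s)
    \<le> c1 * q + c2 * D * ((1 + 4 / A0) * q)"
    using elim c D unfolding q_def mult.assoc by (intro add_mono mult_left_mono) auto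
  also have "\<dots> \<le> (c1 + c2 * (1 + 4 / A0)) * D * q"
    using mult_left_mono[OF D, of "c1 * q"] c unfolding q_def by (simp add: algebra_simps)
  finally show ?case unfolding q_def .
qed

theorem corollary3p10:
  fixes M :: "'w measure" and N :: "'x measure"
    and U :: "'x \<Rightarrow> 'a::euclidean_space \<Rightarrow> real"
    and bx :: "'x \<Rightarrow> 'a \<Rightarrow> 'a" and Dbx :: "'x \<Rightarrow> 'a \<Rightarrow> 'a \<Rightarrow> 'a"
    and b :: "'a \<Rightarrow> 'a"
    and W :: "real \<Rightarrow> 'w \<Rightarrow> 'a" and \<xi> :: "nat \<Rightarrow> 'w \<Rightarrow> 'x" and X0 :: "'w \<Rightarrow> 'a"
    and X :: "real \<Rightarrow> 'w \<Rightarrow> 'a" and \<rho>0 :: "'a \<Rightarrow> real"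
    and \<beta> L L2 \<mu> \<sigma> lam CLS \<Delta>0 \<theta> :: real and ell :: nat and \<eta> :: "nat \<Rightarrow> real"
  assumes beta: "\<beta> > 0"
    and probM: "prob_space M" and probN: "prob_space N"
    \<comment> \<open>U(.;xi) differentiable with b^xi = - grad U(.;xi)\<close>
    and U_grad: "\<forall>z x. GDERIV (U z) x :> - bx z x"
    and U_int: "\<forall>x. integrable N (\<lambda>z. U z x)"
    \<comment> \<open>b = - grad U, U(x) = E U(x;xi)\<close>
    and Ubar_grad: "\<forall>x. GDERIV (\<lambda>y. \<integral>z. U z y \<partial>N) x :> - b x"
    and Z_int: "integrable lborel (\<lambda>x. exp (- \<beta> * (\<integral>z. U z x \<partial>N)))"
    \<comment> \<open>Assumption A\<close>
    and pos_const: "L > 0" "L2 > 0" "\<mu> > 0" "\<sigma> > 0"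
    and A_a: "AE z in N. \<forall>x y. norm (bx z x - bx z y) \<le> L * norm (x - y)"
    and A_b: "AE z in N. (\<forall>x. (bx z has_derivative Dbx z x) (at x)) \<and>
               (\<forall>x y. onorm (\<lambda>h. Dbx z x h - Dbx z y h)
                        \<le> L2 / sqrt (real DIM('a)) * norm (x - y))"
    and A_c: "AE z in N. \<forall>x. x \<bullet> bx z x \<le> - \<mu> * (norm x)\<^sup>2 + \<sigma>"
    and A_d: "\<exists>C. AE z in N. \<forall>x. norm (bx z x - b x) \<le> C"
    \<comment> \<open>Assumption B\<close>
    and rho0_meas: "\<rho>0 \<in> borel_measurable borel" and rho0_nn: "\<forall>x. \<rho>0 x \<ge> 0"
    and lam: "lam \<ge> 1"
    and B_a: "\<forall>x. 1 / lam \<le> \<rho>0 x / gibbs_density \<beta> (\<lambda>y. \<integral>z. U z y \<partial>N) x \<and>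
                  \<rho>0 x / gibbs_density \<beta> (\<lambda>y. \<integral>z. U z y \<partial>N) x \<le> lam"
    and B_b: "log_sobolev
               (density lborel (\<lambda>x. ennreal (gibbs_density \<beta> (\<lambda>y. \<integral>z. U z y \<partial>N) x))) CLS"
    \<comment> \<open>randomness: Brownian motion, i.i.d. xi_k with law nu, X0 with density rho0, all independent\<close>
    and BM: "brownian_motion M W"
    and xi_meas: "\<forall>k. \<xi> k \<in> measurable M N"
    and xi_law: "\<forall>k. distr M N (\<xi> k) = N"
    and X0_meas: "X0 \<in> borel_measurable M"
    and X0_law: "distr M borel X0 = density lborel (\<lambda>x. ennreal (\<rho>0 x))"
    and indep: "prob_space.indep_sets M
       (\<lambda>i. case i of
           None \<Rightarrow> {X0 -` A \<inter> space M | A. A \<in> sets borel}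
         | Some None \<Rightarrow> sigma_sets (space M) (\<Union>t\<in>{0..}. {W t -` A \<inter> space M | A. A \<in> sets borel})
         | Some (Some k) \<Rightarrow> {\<xi> k -` A \<inter> space M | A. A \<in> sets N}) UNIV"
    \<comment> \<open>Langevin diffusion (additive noise, pathwise integral form), X_0 ~ rho0\<close>
    and X_cont: "\<forall>\<omega>\<in>space M. continuous_on {0..} (\<lambda>t. X t \<omega>)"
    and X_eq: "\<forall>\<omega>\<in>space M. \<forall>t\<ge>0.
       X t \<omega> = X0 \<omega> + integral {0..t} (\<lambda>s. b (X s \<omega>)) + sqrt (2 / \<beta>) *\<^sub>R W t \<omega>"
    \<comment> \<open>Delta_0 is the constant of Theorem 3.7\<close>
    and Delta0: "\<Delta>0 > 0"
    and thm37: "thm37_bound M \<beta> bx \<xi> W X0 X \<Delta>0"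
    \<comment> \<open>the polynomially decaying schedule\<close>
    and theta: "0 < \<theta>" "\<theta> < 1"
    and ell_pos: "ell > 0" "real ell powr (- \<theta>) \<le> \<Delta>0"
    and eta: "\<forall>i. \<eta> i = real (ell + i) powr (- \<theta>)"
  shows "\<exists>k0::nat. k0 > 0 \<and> (\<exists>c>0. \<forall>k>k0.
           DKL (distr M borel (sgld \<beta> \<eta> bx \<xi> W X0 k)) (distr M borel (X (Tk \<eta> k)))
             \<le> ereal (c * real DIM('a) * (1 / real k) powr (2 * \<theta>)))"
proof -
  have \<eta>: "\<eta> = poly_schedule ell \<theta>" using eta by (auto simp: poly_schedule_def)
  have admissible: "\<forall>i. 0 < \<eta> i" "decseq \<eta>" "\<eta> 0 \<le> \<Delta>0"
    using poly_schedule_pos[OF ell_pos(1)] poly_schedule_decseq[OF ell_pos(1)] theta ell_pos(2)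
    by (auto simp: \<eta> poly_schedule_def)
  obtain A0 c1 c2 where A0: "0 < A0" and c1: "0 < c1" and c2: "0 < c2" and thm37_bound:
    "\<And>\<eta>'. \<forall>i. 0 < \<eta>' i \<Longrightarrow> decseq \<eta>' \<Longrightarrow> \<eta>' 0 \<le> \<Delta>0 \<Longrightarrow>
      \<forall>k. DKL (distr M borel (sgld \<beta> \<eta>' bx \<xi> W X0 k)) (distr M borel (X (Tk \<eta>' k)))
        \<le> ereal (c1 * (\<eta>' 0)\<^sup>2 * exp (- A0 * Tk \<eta>' k) + c2 * real DIM('a) *
            integral {0..Tk \<eta>' k} (\<lambda>s. exp (- A0 * (Tk \<eta>' k - s)) * step_profile \<eta>' s))"
    using thm37 unfolding thm37_bound_def by blast
  have dim: "1 \<le> real DIM('a)" by (simp add: DIM_positive Suc_leI)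
  obtain N where N: "\<And>k. N \<le> k \<Longrightarrow>
      c1 * (\<eta> 0)\<^sup>2 * exp (- A0 * Tk \<eta> k) + c2 * real DIM('a) *
        integral {0..Tk \<eta> k} (\<lambda>s. exp (- A0 * (Tk \<eta> k - s)) * step_profile \<eta> s)
      \<le> (c1 + c2 * (1 + 4 / A0)) * real DIM('a) * (1 / real k) powr (2 * \<theta>)"
    using poly_schedule_rhs_le[OF A0 theta ell_pos(1) less_imp_le[OF c1] less_imp_le[OF c2] dim]
    unfolding \<eta> eventually_sequentially by blast
  show ?thesis
  proof (intro exI conjI allI impI)
    fix k assume "Suc N < k"
    then show "DKL (distr M borel (sgld \<beta> \<eta> bx \<xi> W X0 k)) (distr M borel (X (Tk \<eta> k)))
      \<le> ereal ((c1 + c2 * (1 + 4 / A0)) * real DIM('a) * (1 / real k) powr (2 * \<theta>))"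
      using thm37_bound[OF admissible, rule_format, of k] N[of k] by (auto intro: order_trans)
  qed (use c1 c2 A0 in \<open>auto simp: add_pos_pos\<close>)
qed

end
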